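(* Let $\mathscr M,\mathscr N$ be convex, weakly compact subsets of $ba(\mathcal A)$. Then (i) $\mathscr M\cap\mathscr N=\varnothing$ if and only if there exists $f\in\mathcal S(\mathcal A)$ with $\inf_{\nu\in\mathscr N}\nu(f)>\sup_{\mu\in\mathscr M}\mu(f)$; and (ii) there exist $\mathcal K\subset\mathcal S(\mathcal A)$ and a set $\mathscr M_0$ of extreme points of $\mathscr M$ such that $\mathscr M=\{m\in ba(\mathcal A):m(k)\le\max_{\mu\in\mathscr M_0}\mu(k)\text{ for all }k\in\mathcal K\}$.
   Context: $\mathcal A$ algebra of subsets of $\Omega$; $ba(\mathcal A)$ the Banach space of bounded finitely additive real set functions with total variation norm; "weakly" refers to the weak topology of this Banach space. $\mathcal S(\mathcal A)$ the $\mathcal A$-simple functions and $\mu(f)=\int f\,d\mu$. *)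

theory Defs
  imports "HOL-Analysis.Analysis"
begin

text \<open>Elements of ba(A) are represented as real functions on sets which vanish
  outside the algebra A (so that ba(A) is a set of functions).\<close>

definition ba :: "'a set \<Rightarrow> 'a set set \<Rightarrow> ('a set \<Rightarrow> real) set" where
  "ba \<Omega> A = {\<mu>. (\<forall>E. E \<notin> A \<longrightarrow> \<mu> E = 0)
      \<and> (\<forall>E\<in>A. \<forall>F\<in>A. E \<inter> F = {} \<longrightarrow> \<mu> (E \<union> F) = \<mu> E + \<mu> F)
      \<and> (\<exists>C. \<forall>E\<in>A. \<bar>\<mu> E\<bar> \<le> C)}"

definition tv_norm :: "'a set \<Rightarrow> 'a set set \<Rightarrow> ('a set \<Rightarrow> real) \<Rightarrow> real" where
  "tv_norm \<Omega> A \<mu> = Sup {(\<Sum>E\<in>P. \<bar>\<mu> E\<bar>) | P. finite P \<and> P \<subseteq> A \<and> disjoint P \<and> \<Union>P = \<Omega>}"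

definition ba_dual :: "'a set \<Rightarrow> 'a set set \<Rightarrow> (('a set \<Rightarrow> real) \<Rightarrow> real) set" where
  "ba_dual \<Omega> A = {\<phi>. (\<forall>\<mu>\<in>ba \<Omega> A. \<forall>\<nu>\<in>ba \<Omega> A. \<phi> (\<lambda>E. \<mu> E + \<nu> E) = \<phi> \<mu> + \<phi> \<nu>)
      \<and> (\<forall>\<mu>\<in>ba \<Omega> A. \<forall>c. \<phi> (\<lambda>E. c * \<mu> E) = c * \<phi> \<mu>)
      \<and> (\<exists>C. \<forall>\<mu>\<in>ba \<Omega> A. \<bar>\<phi> \<mu>\<bar> \<le> C * tv_norm \<Omega> A \<mu>)}"

definition weak_ba :: "'a set \<Rightarrow> 'a set set \<Rightarrow> ('a set \<Rightarrow> real) topology" where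
  "weak_ba \<Omega> A = topology_generated_by
     {{\<mu> \<in> ba \<Omega> A. \<phi> \<mu> \<in> U} | \<phi> U. \<phi> \<in> ba_dual \<Omega> A \<and> open U}"

definition simple_fns :: "'a set \<Rightarrow> 'a set set \<Rightarrow> ('a \<Rightarrow> real) set" where
  "simple_fns \<Omega> A = {f. finite (f ` \<Omega>) \<and> (\<forall>y. {x\<in>\<Omega>. f x = y} \<in> A)}"

definition ba_integral :: "'a set \<Rightarrow> ('a set \<Rightarrow> real) \<Rightarrow> ('a \<Rightarrow> real) \<Rightarrow> real" where
  "ba_integral \<Omega> \<mu> f = (\<Sum>y\<in>f ` \<Omega>. y * \<mu> {x\<in>\<Omega>. f x = y})"

definition convex_ba :: "('a set \<Rightarrow> real) set \<Rightarrow> bool" where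
  "convex_ba M \<longleftrightarrow> (\<forall>\<mu>\<in>M. \<forall>\<nu>\<in>M. \<forall>t::real. 0 \<le> t \<and> t \<le> 1 \<longrightarrow>
       (\<lambda>E. t * \<mu> E + (1 - t) * \<nu> E) \<in> M)"

definition extreme_points_ba :: "('a set \<Rightarrow> real) set \<Rightarrow> ('a set \<Rightarrow> real) set" where
  "extreme_points_ba M = {m \<in> M. \<not> (\<exists>\<mu>\<in>M. \<exists>\<nu>\<in>M. \<exists>t::real. \<mu> \<noteq> \<nu> \<and> 0 < t \<and> t < 1 \<and>
       m = (\<lambda>E. t * \<mu> E + (1 - t) * \<nu> E))}"

end

theory Submission
  imports Defs
begin

text \<open>
  Two different set functions differ on some set E of A, so each pair (\<mu>, \<nu>)
  of M \<times> N is separated by a scaled indicator of such an E; compactness of M \<times> N leaves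
  finitely many simple functions f \<in> F such that every pair has a gap \<mu>(f) - \<nu>(f) < -1
  for some f.  The penalty  sum over f \<in> F of (max 0 (-1 - (\<mu>(f) - \<nu>(f))))^2  attains its
  minimum on M \<times> N; by convexity of M and N the first-order condition at the minimiser
  shows that the positive combination of the f weighted by the penalty terms separates
  M from N with a uniform gap.

  Separating a point m \<notin> M from M (part (i) for M and {m}) shows that M is
  the intersection of the half-spaces m(k) \<le> sup over \<mu> \<in> M of \<mu>(k).  Bauer's maximum
  principle, proved by Zorn's lemma on closed extreme subsets of M, shows that each of
  these suprema is attained at an extreme point, so the suprema may be taken over the
  extreme points only.
\<close>

section \<open>Finitely additive set functions\<close>

lemma ba_empty:
  assumes "algebra \<Omega> A" "\<mu> \<in> ba \<Omega> A"
  shows "\<mu> {} = 0"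
proof -
  interpret algebra \<Omega> A by fact
  have "\<mu> ({} \<union> {}) = \<mu> {} + \<mu> {}"
    using assms(2) empty_sets unfolding ba_def by blast
  then show ?thesis by simp
qed

lemma ba_finite_additive:
  assumes alg: "algebra \<Omega> A" and \<mu>: "\<mu> \<in> ba \<Omega> A" and "finite I"
    and "\<And>i. i \<in> I \<Longrightarrow> B i \<in> A"
    and "\<And>i j. i \<in> I \<Longrightarrow> j \<in> I \<Longrightarrow> i \<noteq> j \<Longrightarrow> B i \<inter> B j = {}"
  shows "\<mu> (\<Union>i\<in>I. B i) = (\<Sum>i\<in>I. \<mu> (B i))"
  using assms(3-5)
proof (induction I rule: finite_induct)
  case empty
  then show ?case using ba_empty[OF alg \<mu>] by simp
next
  case (insert i I)
  interpret algebra \<Omega> A by fact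
  have "(\<Union>j\<in>I. B j) \<in> A" and "B i \<inter> (\<Union>j\<in>I. B j) = {}"
    using insert by auto
  then have "\<mu> (B i \<union> (\<Union>j\<in>I. B j)) = \<mu> (B i) + \<mu> (\<Union>j\<in>I. B j)"
    using \<mu> insert.prems(1) unfolding ba_def by blast
  then show ?case using insert by simp
qed

lemma ba_distinguishing_set:
  assumes "\<mu> \<in> ba \<Omega> A" "\<nu> \<in> ba \<Omega> A" "\<mu> \<noteq> \<nu>"
  obtains E where "E \<in> A" "\<mu> E \<noteq> \<nu> E"
proof -
  obtain E where E: "\<mu> E \<noteq> \<nu> E" using assms(3) by (auto simp: fun_eq_iff)
  moreover have "E \<in> A" using E assms(1,2) unfolding ba_def by force
  ultimately show thesis using that by blast
qed

section \<open>The integral of simple functions\<close>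

lemma simple_fns_partition:
  assumes alg: "algebra \<Omega> A" and fin: "finite J"
    and BA: "\<And>j. j \<in> J \<Longrightarrow> B j \<in> A"
    and cov: "\<Omega> \<subseteq> (\<Union>j\<in>J. B j)"
    and val: "\<And>j x. j \<in> J \<Longrightarrow> x \<in> B j \<Longrightarrow> f x = c j"
  shows "f \<in> simple_fns \<Omega> A"
    and "\<And>y. {x\<in>\<Omega>. f x = y} = (\<Union>j\<in>{j\<in>J. c j = y}. B j)"
    and "f ` \<Omega> \<subseteq> c ` J"
proof -
  interpret algebra \<Omega> A by fact
  have sub: "\<And>j. j \<in> J \<Longrightarrow> B j \<subseteq> \<Omega>" using BA space_closed by auto
  show lev: "{x\<in>\<Omega>. f x = y} = (\<Union>j\<in>{j\<in>J. c j = y}. B j)" for y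
  proof
    show "{x\<in>\<Omega>. f x = y} \<subseteq> (\<Union>j\<in>{j\<in>J. c j = y}. B j)" using cov val by fastforce
    show "(\<Union>j\<in>{j\<in>J. c j = y}. B j) \<subseteq> {x\<in>\<Omega>. f x = y}" using sub val by fastforce
  qed
  show img: "f ` \<Omega> \<subseteq> c ` J" using cov val by fastforce
  have "finite (f ` \<Omega>)" using img fin finite_subset by blast
  moreover have "{x\<in>\<Omega>. f x = y} \<in> A" for y unfolding lev using fin BA by auto
  ultimately show "f \<in> simple_fns \<Omega> A" unfolding simple_fns_def by blast
qed

lemma ba_integral_partition:
  assumes alg: "algebra \<Omega> A" and \<mu>: "\<mu> \<in> ba \<Omega> A" and fin: "finite J"
    and BA: "\<And>j. j \<in> J \<Longrightarrow> B j \<in> A"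
    and disj: "\<And>i j. i \<in> J \<Longrightarrow> j \<in> J \<Longrightarrow> i \<noteq> j \<Longrightarrow> B i \<inter> B j = {}"
    and cov: "\<Omega> \<subseteq> (\<Union>j\<in>J. B j)"
    and val: "\<And>j x. j \<in> J \<Longrightarrow> x \<in> B j \<Longrightarrow> f x = c j"
  shows "ba_integral \<Omega> \<mu> f = (\<Sum>j\<in>J. c j * \<mu> (B j))"
proof -
  note P = simple_fns_partition[OF alg fin BA cov val]
  have level: "\<mu> {x\<in>\<Omega>. f x = y} = (\<Sum>j\<in>{j\<in>J. c j = y}. \<mu> (B j))" for y
  proof -
    have "\<mu> (\<Union>j\<in>{j\<in>J. c j = y}. B j) = (\<Sum>j\<in>{j\<in>J. c j = y}. \<mu> (B j))"
      by (rule ba_finite_additive[OF alg \<mu>]) (use fin BA disj in auto)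
    then show ?thesis using P(2)[where y = y] by simp
  qed
  have "ba_integral \<Omega> \<mu> f = (\<Sum>y\<in>c ` J. y * \<mu> {x\<in>\<Omega>. f x = y})"
    unfolding ba_integral_def
  proof (rule sum.mono_neutral_left)
    have "{x\<in>\<Omega>. f x = y} = {}" if "y \<notin> f ` \<Omega>" for y using that by blast
    then show "\<forall>y\<in>c ` J - f ` \<Omega>. y * \<mu> {x\<in>\<Omega>. f x = y} = 0"
      using ba_empty[OF alg \<mu>] by (metis DiffD2 mult_zero_right)
  qed (use fin P(3) in auto)
  also have "\<dots> = (\<Sum>y\<in>c ` J. (\<Sum>j\<in>{j\<in>J. c j = y}. c j * \<mu> (B j)))"
    unfolding level sum_distrib_left by (intro sum.cong refl) auto
  also have "\<dots> = (\<Sum>j\<in>J. c j * \<mu> (B j))"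
    by (rule sum.group) (use fin in auto)
  finally show ?thesis .
qed

lemma ba_integral_comb:
  "ba_integral \<Omega> (\<lambda>E. t * \<mu> E + s * \<nu> E) f = t * ba_integral \<Omega> \<mu> f + s * ba_integral \<Omega> \<nu> f"
  unfolding ba_integral_def by (simp add: sum_distrib_left sum.distrib algebra_simps)

text \<open>Two simple functions are simultaneously constant on the cells of the common
  refinement of their level-set partitions; this gives linearity in the function.\<close>
lemma simple_fns_lincomb:
  assumes alg: "algebra \<Omega> A" and f: "f \<in> simple_fns \<Omega> A" and g: "g \<in> simple_fns \<Omega> A"
  shows "(\<lambda>x. a * f x + b * g x) \<in> simple_fns \<Omega> A"
    and "\<mu> \<in> ba \<Omega> A \<Longrightarrow> ba_integral \<Omega> \<mu> (\<lambda>x. a * f x + b * g x)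
           = a * ba_integral \<Omega> \<mu> f + b * ba_integral \<Omega> \<mu> g"
proof -
  interpret algebra \<Omega> A by fact
  define J where "J = f ` \<Omega> \<times> g ` \<Omega>"
  define B where "B = (\<lambda>(y, z). {x\<in>\<Omega>. f x = y} \<inter> {x\<in>\<Omega>. g x = z})"
  have fin: "finite J" using f g unfolding J_def simple_fns_def by auto
  have BA: "\<And>j. j \<in> J \<Longrightarrow> B j \<in> A" using f g unfolding B_def simple_fns_def by auto
  have disj: "\<And>i j. i \<in> J \<Longrightarrow> j \<in> J \<Longrightarrow> i \<noteq> j \<Longrightarrow> B i \<inter> B j = {}"
    unfolding B_def by auto
  have cov: "\<Omega> \<subseteq> (\<Union>j\<in>J. B j)" unfolding B_def J_def by auto
  have val: "\<And>j x. j \<in> J \<Longrightarrow> x \<in> B j \<Longrightarrow> f x = fst j \<and> g x = snd j"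
    unfolding B_def by auto
  show "(\<lambda>x. a * f x + b * g x) \<in> simple_fns \<Omega> A"
    by (rule simple_fns_partition(1)[OF alg fin BA cov, of _ "\<lambda>j. a * fst j + b * snd j"])
      (use val in auto)
  assume \<mu>: "\<mu> \<in> ba \<Omega> A"
  note integral = ba_integral_partition[OF alg \<mu> fin BA disj cov]
  have "ba_integral \<Omega> \<mu> (\<lambda>x. a * f x + b * g x) = (\<Sum>j\<in>J. (a * fst j + b * snd j) * \<mu> (B j))"
    by (rule integral) (use val in auto)
  moreover have "ba_integral \<Omega> \<mu> f = (\<Sum>j\<in>J. fst j * \<mu> (B j))"
    by (rule integral) (use val in auto)
  moreover have "ba_integral \<Omega> \<mu> g = (\<Sum>j\<in>J. snd j * \<mu> (B j))"
    by (rule integral) (use val in auto)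
  ultimately show "ba_integral \<Omega> \<mu> (\<lambda>x. a * f x + b * g x)
      = a * ba_integral \<Omega> \<mu> f + b * ba_integral \<Omega> \<mu> g"
    by (simp add: sum_distrib_left sum.distrib algebra_simps)
qed

lemma simple_fns_zero:
  assumes "algebra \<Omega> A"
  shows "(\<lambda>x. 0) \<in> simple_fns \<Omega> A" and "ba_integral \<Omega> \<mu> (\<lambda>x. 0) = 0"
proof -
  interpret algebra \<Omega> A by fact
  show "(\<lambda>x. 0) \<in> simple_fns \<Omega> A"
    by (rule simple_fns_partition(1)[OF assms, of "{()}" "\<lambda>_. \<Omega>" _ "\<lambda>_. 0"]) auto
  show "ba_integral \<Omega> \<mu> (\<lambda>x. 0) = 0"
    unfolding ba_integral_def by (intro sum.neutral) auto
qed

lemma simple_fns_sum: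
  assumes alg: "algebra \<Omega> A" and "finite I" and "\<And>i. i \<in> I \<Longrightarrow> g i \<in> simple_fns \<Omega> A"
  shows "(\<lambda>x. \<Sum>i\<in>I. w i * g i x) \<in> simple_fns \<Omega> A \<and>
    (\<forall>\<mu>\<in>ba \<Omega> A. ba_integral \<Omega> \<mu> (\<lambda>x. \<Sum>i\<in>I. w i * g i x) = (\<Sum>i\<in>I. w i * ba_integral \<Omega> \<mu> (g i)))"
  using assms(2,3)
proof (induction I rule: finite_induct)
  case empty
  then show ?case using simple_fns_zero[OF alg] by simp
next
  case (insert i I)
  have sum_eq: "(\<lambda>x. \<Sum>j\<in>insert i I. w j * g j x) = (\<lambda>x. w i * g i x + 1 * (\<Sum>j\<in>I. w j * g j x))"
    using insert by simp
  have "g i \<in> simple_fns \<Omega> A" using insert by simp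
  note lincomb = simple_fns_lincomb[OF alg this, where a = "w i" and b = 1]
  show ?case unfolding sum_eq using insert lincomb by simp
qed

lemma simple_fns_indicator:
  assumes alg: "algebra \<Omega> A" and E: "E \<in> A"
  shows "(\<lambda>x. if x \<in> E then c else 0) \<in> simple_fns \<Omega> A"
    and "\<mu> \<in> ba \<Omega> A \<Longrightarrow> ba_integral \<Omega> \<mu> (\<lambda>x. if x \<in> E then c else 0) = c * \<mu> E"
proof -
  interpret algebra \<Omega> A by fact
  let ?B = "\<lambda>b. if b then E else \<Omega> - E"
  let ?c = "\<lambda>b. if b then c else (0::real)"
  show "(\<lambda>x. if x \<in> E then c else 0) \<in> simple_fns \<Omega> A"
    by (rule simple_fns_partition(1)[OF alg, of UNIV ?B _ ?c]) (use E in auto)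
  assume \<mu>: "\<mu> \<in> ba \<Omega> A"
  have "ba_integral \<Omega> \<mu> (\<lambda>x. if x \<in> E then c else 0) = (\<Sum>b\<in>UNIV. ?c b * \<mu> (?B b))"
    by (rule ba_integral_partition[OF alg \<mu>]) (use E in auto)
  then show "ba_integral \<Omega> \<mu> (\<lambda>x. if x \<in> E then c else 0) = c * \<mu> E"
    by (simp add: UNIV_bool)
qed

section \<open>Weak continuity of the integral\<close>

text \<open>A set function bounded by C on A has variation at most 2C on every finite disjoint
  family: split the family according to the sign of the values and use additivity.\<close>
lemma ba_variation_bound:
  assumes alg: "algebra \<Omega> A" and \<mu>: "\<mu> \<in> ba \<Omega> A" and C: "\<forall>E\<in>A. \<bar>\<mu> E\<bar> \<le> C"
    and P: "finite P" "P \<subseteq> A" "disjoint P"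
  shows "(\<Sum>E\<in>P. \<bar>\<mu> E\<bar>) \<le> 2 * C"
proof -
  interpret algebra \<Omega> A by fact
  define Pos where "Pos = {E\<in>P. \<mu> E \<ge> 0}"
  define Neg where "Neg = {E\<in>P. \<mu> E < 0}"
  have fin: "finite Pos" "finite Neg" using P unfolding Pos_def Neg_def by auto
  have "(\<Sum>E\<in>P. \<bar>\<mu> E\<bar>) = (\<Sum>E\<in>Pos. \<bar>\<mu> E\<bar>) + (\<Sum>E\<in>Neg. \<bar>\<mu> E\<bar>)"
    using P(1) unfolding Pos_def Neg_def by (subst sum.union_disjoint[symmetric]) (auto intro: sum.cong)
  also have "\<dots> = (\<Sum>E\<in>Pos. \<mu> E) + (\<Sum>E\<in>Neg. - \<mu> E)"
    unfolding Pos_def Neg_def by (intro arg_cong2[where f = "(+)"] sum.cong) auto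
  finally have split: "(\<Sum>E\<in>P. \<bar>\<mu> E\<bar>) = (\<Sum>E\<in>Pos. \<mu> E) - (\<Sum>E\<in>Neg. \<mu> E)"
    by (simp add: sum_negf)
  have bounded: "\<bar>\<Sum>E\<in>Q. \<mu> E\<bar> \<le> C" if "Q \<subseteq> P" for Q
  proof -
    have "finite Q" "Q \<subseteq> A" using that P finite_subset by auto
    moreover have "\<forall>E\<in>Q. \<forall>F\<in>Q. E \<noteq> F \<longrightarrow> id E \<inter> id F = {}"
      using that P(3) unfolding disjoint_def disjnt_def by auto
    ultimately have "\<mu> (\<Union>Q) = (\<Sum>E\<in>Q. \<mu> E)" and "\<Union>Q \<in> A"
      using ba_finite_additive[OF alg \<mu>, of Q id] by auto
    then show ?thesis using C by force
  qed
  have "Pos \<subseteq> P" "Neg \<subseteq> P" unfolding Pos_def Neg_def by auto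
  then show ?thesis using split bounded by (smt (verit))
qed

text \<open>Consequently the supremum defining the total variation norm is finite and bounds
  the variation along every finite partition of \<Omega>.\<close>
lemma tv_norm_upper:
  assumes alg: "algebra \<Omega> A" and \<mu>: "\<mu> \<in> ba \<Omega> A"
    and P: "finite P" "P \<subseteq> A" "disjoint P" "\<Union>P = \<Omega>"
  shows "(\<Sum>E\<in>P. \<bar>\<mu> E\<bar>) \<le> tv_norm \<Omega> A \<mu>"
proof -
  obtain C where C: "\<forall>E\<in>A. \<bar>\<mu> E\<bar> \<le> C" using \<mu> unfolding ba_def by auto
  have "bdd_above {(\<Sum>E\<in>P. \<bar>\<mu> E\<bar>) | P. finite P \<and> P \<subseteq> A \<and> disjoint P \<and> \<Union>P = \<Omega>}"
    using ba_variation_bound[OF alg \<mu> C] by (intro bdd_aboveI[where M = "2 * C"]) auto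
  then show ?thesis unfolding tv_norm_def by (rule cSup_upper[rotated]) (use P in auto)
qed

text \<open>For a simple function f the map \<mu> \<mapsto> \<mu>(f) is a bounded linear functional on ba(A):
  its norm is at most the sum of the absolute values of f.\<close>
lemma ba_integral_in_dual:
  assumes alg: "algebra \<Omega> A" and f: "f \<in> simple_fns \<Omega> A"
  shows "(\<lambda>\<mu>. ba_integral \<Omega> \<mu> f) \<in> ba_dual \<Omega> A"
proof -
  have fin: "finite (f ` \<Omega>)" and lev: "\<And>y. {x\<in>\<Omega>. f x = y} \<in> A"
    using f unfolding simple_fns_def by auto
  define C where "C = (\<Sum>y\<in>f ` \<Omega>. \<bar>y\<bar>)"
  define L where "L y = {x\<in>\<Omega>. f x = y}" for y
  have inj: "inj_on L (f ` \<Omega>)" unfolding L_def inj_on_def by blast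
  have "\<bar>ba_integral \<Omega> \<mu> f\<bar> \<le> C * tv_norm \<Omega> A \<mu>" if \<mu>: "\<mu> \<in> ba \<Omega> A" for \<mu>
  proof -
    have "\<bar>ba_integral \<Omega> \<mu> f\<bar> \<le> (\<Sum>y\<in>f ` \<Omega>. \<bar>y\<bar> * \<bar>\<mu> (L y)\<bar>)"
      unfolding ba_integral_def L_def using sum_abs by (metis (no_types, lifting) abs_mult sum.cong)
    also have "\<dots> \<le> (\<Sum>y\<in>f ` \<Omega>. C * \<bar>\<mu> (L y)\<bar>)"
      unfolding C_def using fin by (intro sum_mono mult_right_mono member_le_sum) auto
    also have "\<dots> = C * (\<Sum>E\<in>L ` f ` \<Omega>. \<bar>\<mu> E\<bar>)"
      by (simp add: sum_distrib_left sum.reindex[OF inj])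
    also have "\<dots> \<le> C * tv_norm \<Omega> A \<mu>"
    proof (intro mult_left_mono tv_norm_upper[OF alg \<mu>])
      show "disjoint (L ` f ` \<Omega>)" unfolding disjoint_def disjnt_def L_def by auto
    qed (use fin lev in \<open>auto simp: C_def L_def\<close>)
    finally show ?thesis .
  qed
  moreover have "ba_integral \<Omega> (\<lambda>E. \<mu> E + \<nu> E) f = ba_integral \<Omega> \<mu> f + ba_integral \<Omega> \<nu> f" for \<mu> \<nu>
    using ba_integral_comb[where t = 1 and s = 1] by simp
  moreover have "ba_integral \<Omega> (\<lambda>E. c * \<mu> E) f = c * ba_integral \<Omega> \<mu> f" for \<mu> c
    using ba_integral_comb[where s = 0] by simp
  ultimately show ?thesis unfolding ba_dual_def by blast
qed

lemma topspace_weak_ba [simp]: "topspace (weak_ba \<Omega> A) = ba \<Omega> A"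
proof -
  have "(\<lambda>_. 0) \<in> ba_dual \<Omega> A" unfolding ba_dual_def by (auto intro: exI[of _ 0])
  then have "ba \<Omega> A \<in> {{\<mu> \<in> ba \<Omega> A. \<phi> \<mu> \<in> U} | \<phi> U. \<phi> \<in> ba_dual \<Omega> A \<and> open U}"
    by force
  then show ?thesis unfolding weak_ba_def topology_generated_by_topspace by blast
qed

lemma continuous_map_ba_dual:
  assumes "\<phi> \<in> ba_dual \<Omega> A"
  shows "continuous_map (weak_ba \<Omega> A) euclideanreal \<phi>"
  unfolding continuous_map_def topspace_weak_ba
proof (intro conjI allI impI)
  fix U :: "real set" assume "openin euclideanreal U"
  then show "openin (weak_ba \<Omega> A) {x \<in> ba \<Omega> A. \<phi> x \<in> U}"
    unfolding weak_ba_def using assms by (intro topology_generated_by_Basis) auto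
qed simp

lemma continuous_map_ba_integral:
  assumes "algebra \<Omega> A" "f \<in> simple_fns \<Omega> A"
  shows "continuous_map (weak_ba \<Omega> A) euclideanreal (\<lambda>\<mu>. ba_integral \<Omega> \<mu> f)"
  by (rule continuous_map_ba_dual[OF ba_integral_in_dual[OF assms]])

lemma compactin_attains_max:
  assumes "compactin X S" "S \<noteq> {}" "continuous_map X euclideanreal h"
  obtains x where "x \<in> S" "\<And>y. y \<in> S \<Longrightarrow> h y \<le> h x"
proof -
  have "compact (h ` S)" using image_compactin[OF assms(1,3)] by simp
  then show thesis using compact_attains_sup[of "h ` S"] assms(2) that by blast
qed

lemma compactin_attains_min:
  assumes "compactin X S" "S \<noteq> {}" "continuous_map X euclideanreal h"
  obtains x where "x \<in> S" "\<And>y. y \<in> S \<Longrightarrow> h x \<le> h y"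
proof -
  have "compact (h ` S)" using image_compactin[OF assms(1,3)] by simp
  then show thesis using compact_attains_inf[of "h ` S"] assms(2) that by blast
qed

section \<open>Strict separation of disjoint convex weakly compact sets\<close>

lemma continuous_map_ba_gap:
  assumes "algebra \<Omega> A" "f \<in> simple_fns \<Omega> A"
  shows "continuous_map (prod_topology (weak_ba \<Omega> A) (weak_ba \<Omega> A)) euclideanreal
           (\<lambda>z. ba_integral \<Omega> (fst z) f - ba_integral \<Omega> (snd z) f)"
proof -
  note integral = continuous_map_ba_integral[OF assms]
  show ?thesis
    using continuous_map_diff[OF continuous_map_compose[OF continuous_map_fst integral]
        continuous_map_compose[OF continuous_map_snd integral]]
    by (simp add: o_def)
qed

text \<open>Each
  single pair is separated by a scaled indicator of a set on which \<mu> and \<nu> differ.\<close>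
lemma finite_separating_family:
  assumes alg: "algebra \<Omega> A" and MA: "M \<subseteq> ba \<Omega> A" and NA: "N \<subseteq> ba \<Omega> A"
    and kM: "compactin (weak_ba \<Omega> A) M" and kN: "compactin (weak_ba \<Omega> A) N"
    and disj: "M \<inter> N = {}"
  obtains F where "F \<subseteq> simple_fns \<Omega> A" "finite F"
    "\<And>\<mu> \<nu>. \<mu> \<in> M \<Longrightarrow> \<nu> \<in> N \<Longrightarrow> \<exists>f\<in>F. ba_integral \<Omega> \<mu> f - ba_integral \<Omega> \<nu> f < -1"
proof -
  let ?P = "prod_topology (weak_ba \<Omega> A) (weak_ba \<Omega> A)"
  define U where
    "U f = {z \<in> topspace ?P. ba_integral \<Omega> (fst z) f - ba_integral \<Omega> (snd z) f \<in> {..< -1}}" for f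
  have "openin ?P (U f)" if "f \<in> simple_fns \<Omega> A" for f
    unfolding U_def by (rule openin_continuous_map_preimage[OF continuous_map_ba_gap[OF alg that]]) simp
  then have opens: "\<And>V. V \<in> U ` simple_fns \<Omega> A \<Longrightarrow> openin ?P V" by blast
  have cover: "M \<times> N \<subseteq> \<Union>(U ` simple_fns \<Omega> A)"
  proof clarify
    fix \<mu> \<nu> assume \<mu>: "\<mu> \<in> M" and \<nu>: "\<nu> \<in> N"
    then have \<mu>A: "\<mu> \<in> ba \<Omega> A" and \<nu>A: "\<nu> \<in> ba \<Omega> A" using MA NA by auto
    obtain E where E: "E \<in> A" "\<mu> E \<noteq> \<nu> E"
      using ba_distinguishing_set[OF \<mu>A \<nu>A] \<mu> \<nu> disj by blast
    define f where "f x = (if x \<in> E then -2 / (\<mu> E - \<nu> E) else 0)" for x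
    have f: "f \<in> simple_fns \<Omega> A" unfolding f_def by (rule simple_fns_indicator(1)[OF alg E(1)])
    have "ba_integral \<Omega> \<mu> f - ba_integral \<Omega> \<nu> f = -2 / (\<mu> E - \<nu> E) * (\<mu> E - \<nu> E)"
      unfolding f_def using simple_fns_indicator(2)[OF alg E(1)] \<mu>A \<nu>A
      by (simp add: right_diff_distrib)
    also have "\<dots> = -2" using E(2) by (simp add: divide_simps)
    finally have "ba_integral \<Omega> \<mu> f - ba_integral \<Omega> \<nu> f = -2" .
    then show "(\<mu>, \<nu>) \<in> \<Union>(U ` simple_fns \<Omega> A)" using f \<mu>A \<nu>A unfolding U_def by force
  qed
  have "compactin ?P (M \<times> N)" using kM kN by (simp add: compactin_Times)
  then obtain \<U> where \<U>: "finite \<U>" "\<U> \<subseteq> U ` simple_fns \<Omega> A" "M \<times> N \<subseteq> \<Union>\<U>"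
    using compactinD[OF _ opens cover] by blast
  then obtain F where F: "F \<subseteq> simple_fns \<Omega> A" "finite F" "\<U> = U ` F"
    using finite_subset_image[OF \<U>(1,2)] by blast
  show thesis
  proof (rule that[OF F(1,2)])
    fix \<mu> \<nu> assume "\<mu> \<in> M" "\<nu> \<in> N"
    then have "(\<mu>, \<nu>) \<in> \<Union>(U ` F)" using \<U>(3) unfolding F(3) by blast
    then show "\<exists>f\<in>F. ba_integral \<Omega> \<mu> f - ba_integral \<Omega> \<nu> f < -1" unfolding U_def by auto
  qed
qed

lemma sq_max_le: "(max 0 (u - s))\<^sup>2 \<le> (max 0 u - s)\<^sup>2" for u s :: real
  unfolding abs_le_square_iff[symmetric] by (auto simp: max_def abs_if)

text \<open>First-order condition for the quadratic penalty
  P(a) = \<Sum>f\<in>F. (max 0 (-1 - a f))^2 on functions a :: F \<Rightarrow> real: if P does not decrease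
  along the segment from a in direction d, then the directional derivative
  -2 \<Sum>f\<in>F. max 0 (-1 - a f) * d f is nonnegative.  The bound is derived by hand from
  P(a + t d) \<le> P(a) - 2 t S + t^2 \<Sum>f\<in>F. (d f)^2 for suitably small t > 0.\<close>
lemma penalty_first_order:
  fixes a d :: "'b \<Rightarrow> real"
  assumes "finite F"
    and min: "\<And>t. 0 < t \<Longrightarrow> t \<le> 1 \<Longrightarrow>
       (\<Sum>f\<in>F. (max 0 (-1 - a f))\<^sup>2) \<le> (\<Sum>f\<in>F. (max 0 (-1 - (a f + t * d f)))\<^sup>2)"
  shows "(\<Sum>f\<in>F. max 0 (-1 - a f) * d f) \<le> 0"
proof (rule ccontr)
  define w where "w f = max 0 (-1 - a f)" for f
  define S where "S = (\<Sum>f\<in>F. w f * d f)"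
  define Q where "Q = (\<Sum>f\<in>F. (d f)\<^sup>2)"
  assume "\<not> (\<Sum>f\<in>F. max 0 (-1 - a f) * d f) \<le> 0"
  then have S: "S > 0" unfolding S_def w_def by simp
  have Q: "Q \<ge> 0" unfolding Q_def by (simp add: sum_nonneg)
  define t where "t = min 1 (S / (Q + 1))"
  have t: "0 < t" "t \<le> 1" unfolding t_def using S Q by auto
  have "(\<Sum>f\<in>F. (w f)\<^sup>2) \<le> (\<Sum>f\<in>F. (max 0 (-1 - (a f + t * d f)))\<^sup>2)"
    using min[OF t] unfolding w_def .
  also have "\<dots> \<le> (\<Sum>f\<in>F. (w f - t * d f)\<^sup>2)"
  proof (rule sum_mono)
    fix f show "(max 0 (-1 - (a f + t * d f)))\<^sup>2 \<le> (w f - t * d f)\<^sup>2"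
      using sq_max_le[of "-1 - a f" "t * d f"] unfolding w_def by (simp add: algebra_simps)
  qed
  also have "\<dots> = (\<Sum>f\<in>F. (w f)\<^sup>2) - 2 * t * S + t\<^sup>2 * Q"
    unfolding S_def Q_def
    by (simp add: power2_diff sum.distrib sum_subtractf sum_distrib_left algebra_simps power_mult_distrib)
  finally have "t * (2 * S) \<le> t * (t * Q)" by (simp add: power2_eq_square algebra_simps)
  then have "2 * S \<le> t * Q" using t by simp
  moreover have "t * Q \<le> S / (Q + 1) * Q" unfolding t_def using Q by (intro mult_right_mono) auto
  moreover have "S / (Q + 1) * Q < 2 * S"
  proof -
    have "Q / (Q + 1) < 2" using Q by (simp add: field_simps)
    then have "S * (Q / (Q + 1)) < S * 2" using S by (intro mult_strict_left_mono)
    then show ?thesis by simp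
  qed
  ultimately show False by simp
qed

lemma penalty_weights_negative:
  fixes a :: "'b \<Rightarrow> real"
  assumes "finite F" "f0 \<in> F" "a f0 < -1"
  shows "(\<Sum>f\<in>F. max 0 (-1 - a f) * a f) < 0"
proof -
  have "(\<Sum>f\<in>F. max 0 (-1 - a f) * a f) \<le> (\<Sum>f\<in>F. - max 0 (-1 - a f))"
  proof (rule sum_mono)
    fix f
    have "max 0 (-1 - a f) * (a f + 1) \<le> 0"
      by (cases "a f < -1") (auto simp: mult_nonpos_nonneg mult_nonneg_nonpos)
    then show "max 0 (-1 - a f) * a f \<le> - max 0 (-1 - a f)" by (simp add: algebra_simps)
  qed
  moreover have "0 < (\<Sum>f\<in>F. max 0 (-1 - a f))"
    by (rule sum_pos2[OF assms(1,2)]) (use assms(3) in auto)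
  ultimately show ?thesis by (simp add: sum_negf)
qed

lemma penalty_minimizer:
  assumes alg: "algebra \<Omega> A"
    and kM: "compactin (weak_ba \<Omega> A) M" and kN: "compactin (weak_ba \<Omega> A) N"
    and ne: "M \<noteq> {}" "N \<noteq> {}" and F: "F \<subseteq> simple_fns \<Omega> A" "finite F"
  defines "P \<equiv> \<lambda>\<mu> \<nu>. \<Sum>f\<in>F. (max 0 (-1 - (ba_integral \<Omega> \<mu> f - ba_integral \<Omega> \<nu> f)))\<^sup>2"
  obtains \<mu>0 \<nu>0 where "\<mu>0 \<in> M" "\<nu>0 \<in> N" "\<And>\<mu> \<nu>. \<mu> \<in> M \<Longrightarrow> \<nu> \<in> N \<Longrightarrow> P \<mu>0 \<nu>0 \<le> P \<mu> \<nu>"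
proof -
  let ?P = "prod_topology (weak_ba \<Omega> A) (weak_ba \<Omega> A)"
  define gap where "gap f = (\<lambda>z. ba_integral \<Omega> (fst z) f - ba_integral \<Omega> (snd z) f)" for f
  have "continuous_map ?P euclideanreal (gap f)" if "f \<in> F" for f
    unfolding gap_def using continuous_map_ba_gap[OF alg] F(1) that by blast
  then have "continuous_map ?P euclideanreal (\<lambda>z. \<Sum>f\<in>F. (max 0 (-1 - gap f z))\<^sup>2)"
    by (intro continuous_map_sum F(2) continuous_map_real_pow continuous_map_real_max
        continuous_map_diff continuous_map_canonical_const)
  then have "continuous_map ?P euclideanreal (\<lambda>z. P (fst z) (snd z))"
    unfolding P_def gap_def by simp
  moreover have "compactin ?P (M \<times> N)" using kM kN by (simp add: compactin_Times)
  ultimately obtain z where "z \<in> M \<times> N" "\<And>y. y \<in> M \<times> N \<Longrightarrow> P (fst z) (snd z) \<le> P (fst y) (snd y)"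
    using compactin_attains_min[of ?P "M \<times> N"] ne by blast
  then show thesis using that[of "fst z" "snd z"] by force
qed

text \<open>Strict separation: a positive combination g of the finitely many separating
  functions, weighted by the penalty at a minimiser, separates M from N with a uniform gap.
  Convexity enters through the first-order condition at the minimiser.\<close>
lemma separation:
  assumes alg: "algebra \<Omega> A" and MA: "M \<subseteq> ba \<Omega> A" and NA: "N \<subseteq> ba \<Omega> A"
    and cM: "convex_ba M" and cN: "convex_ba N"
    and kM: "compactin (weak_ba \<Omega> A) M" and kN: "compactin (weak_ba \<Omega> A) N"
    and disj: "M \<inter> N = {}" and ne: "M \<noteq> {}" "N \<noteq> {}"
  obtains g \<delta> where "g \<in> simple_fns \<Omega> A" "\<delta> < 0"
    "\<And>\<mu> \<nu>. \<mu> \<in> M \<Longrightarrow> \<nu> \<in> N \<Longrightarrow> ba_integral \<Omega> \<mu> g - ba_integral \<Omega> \<nu> g \<le> \<delta>"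
proof -
  obtain F where F: "F \<subseteq> simple_fns \<Omega> A" "finite F"
    and cover: "\<And>\<mu> \<nu>. \<mu> \<in> M \<Longrightarrow> \<nu> \<in> N \<Longrightarrow> \<exists>f\<in>F. ba_integral \<Omega> \<mu> f - ba_integral \<Omega> \<nu> f < -1"
    using finite_separating_family[OF alg MA NA kM kN disj] by blast
  define gap where "gap \<mu> \<nu> f = ba_integral \<Omega> \<mu> f - ba_integral \<Omega> \<nu> f" for \<mu> \<nu> f
  obtain \<mu>0 \<nu>0 where \<mu>0: "\<mu>0 \<in> M" and \<nu>0: "\<nu>0 \<in> N" and min:
    "\<And>\<mu> \<nu>. \<mu> \<in> M \<Longrightarrow> \<nu> \<in> N \<Longrightarrow> (\<Sum>f\<in>F. (max 0 (-1 - gap \<mu>0 \<nu>0 f))\<^sup>2) \<le> (\<Sum>f\<in>F. (max 0 (-1 - gap \<mu> \<nu> f))\<^sup>2)"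
    using penalty_minimizer[OF alg kM kN ne F] unfolding gap_def by blast
  define w where "w f = max 0 (-1 - gap \<mu>0 \<nu>0 f)" for f
  have first_order: "(\<Sum>f\<in>F. w f * (gap \<mu> \<nu> f - gap \<mu>0 \<nu>0 f)) \<le> 0" if "\<mu> \<in> M" "\<nu> \<in> N" for \<mu> \<nu>
    unfolding w_def
  proof (rule penalty_first_order[OF F(2)])
    fix t :: real assume t: "0 < t" "t \<le> 1"
    let ?\<mu>t = "\<lambda>E. t * \<mu> E + (1 - t) * \<mu>0 E" and ?\<nu>t = "\<lambda>E. t * \<nu> E + (1 - t) * \<nu>0 E"
    have mem: "?\<mu>t \<in> M" "?\<nu>t \<in> N" using cM cN that \<mu>0 \<nu>0 t unfolding convex_ba_def by auto
    have gap_t: "gap ?\<mu>t ?\<nu>t f = gap \<mu>0 \<nu>0 f + t * (gap \<mu> \<nu> f - gap \<mu>0 \<nu>0 f)" for f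
      unfolding gap_def ba_integral_comb by (simp add: algebra_simps)
    show "(\<Sum>f\<in>F. (max 0 (-1 - gap \<mu>0 \<nu>0 f))\<^sup>2)
        \<le> (\<Sum>f\<in>F. (max 0 (-1 - (gap \<mu>0 \<nu>0 f + t * (gap \<mu> \<nu> f - gap \<mu>0 \<nu>0 f))))\<^sup>2)"
      using min[OF mem] unfolding gap_t .
  qed
  define g where "g x = (\<Sum>f\<in>F. w f * f x)" for x
  have g: "g \<in> simple_fns \<Omega> A"
    and g_integral: "\<And>\<mu>. \<mu> \<in> ba \<Omega> A \<Longrightarrow> ba_integral \<Omega> \<mu> g = (\<Sum>f\<in>F. w f * ba_integral \<Omega> \<mu> f)"
    using simple_fns_sum[OF alg F(2), of id w] F(1) unfolding g_def by auto
  define \<delta> where "\<delta> = (\<Sum>f\<in>F. w f * gap \<mu>0 \<nu>0 f)"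
  show thesis
  proof (rule that[OF g])
    obtain f0 where "f0 \<in> F" "gap \<mu>0 \<nu>0 f0 < -1" using cover[OF \<mu>0 \<nu>0] unfolding gap_def by blast
    then show "\<delta> < 0" unfolding \<delta>_def w_def by (rule penalty_weights_negative[OF F(2)])
  next
    fix \<mu> \<nu> assume "\<mu> \<in> M" "\<nu> \<in> N"
    then have "\<mu> \<in> ba \<Omega> A" "\<nu> \<in> ba \<Omega> A" using MA NA by auto
    then have "ba_integral \<Omega> \<mu> g - ba_integral \<Omega> \<nu> g = (\<Sum>f\<in>F. w f * gap \<mu> \<nu> f)"
      by (simp add: g_integral gap_def sum_subtractf right_diff_distrib)
    then show "ba_integral \<Omega> \<mu> g - ba_integral \<Omega> \<nu> g \<le> \<delta>"
      using first_order[OF \<open>\<mu> \<in> M\<close> \<open>\<nu> \<in> N\<close>]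
      unfolding \<delta>_def by (simp add: sum_subtractf right_diff_distrib)
  qed
qed

lemma SUP_less_INF_of_gap:
  fixes f g :: "'b \<Rightarrow> real"
  assumes "X \<noteq> {}" "Y \<noteq> {}" "0 < c" and gap: "\<And>x y. x \<in> X \<Longrightarrow> y \<in> Y \<Longrightarrow> f x + c \<le> g y"
  shows "(SUP x\<in>X. ereal (f x)) < (INF y\<in>Y. ereal (g y))"
proof -
  obtain x0 y0 where "x0 \<in> X" "y0 \<in> Y" using assms(1,2) by blast
  have upper: "(SUP x\<in>X. ereal (f x)) \<le> ereal (g y - c)" if "y \<in> Y" for y
  proof (rule SUP_least)
    fix x assume "x \<in> X"
    then show "ereal (f x) \<le> ereal (g y - c)" using gap[OF _ that] by force
  qed
  have "ereal (f x0) \<le> (SUP x\<in>X. ereal (f x))" using \<open>x0 \<in> X\<close> by (rule SUP_upper)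
  then obtain r where r: "(SUP x\<in>X. ereal (f x)) = ereal r"
    using upper[OF \<open>y0 \<in> Y\<close>] by (cases "SUP x\<in>X. ereal (f x)") auto
  have lower: "ereal (r + c) \<le> (INF y\<in>Y. ereal (g y))"
  proof (rule INF_greatest)
    fix y assume "y \<in> Y"
    then have "ereal r \<le> ereal (g y - c)" using upper r by metis
    then have "r \<le> g y - c" by simp
    then show "ereal (r + c) \<le> ereal (g y)" by simp
  qed
  have "ereal r < ereal (r + c)" using \<open>0 < c\<close> by simp
  then show ?thesis unfolding r using lower by (rule less_le_trans)
qed

theorem separation_iff:
  assumes alg: "algebra \<Omega> A" and MA: "M \<subseteq> ba \<Omega> A" and NA: "N \<subseteq> ba \<Omega> A"
    and cM: "convex_ba M" and cN: "convex_ba N"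
    and kM: "compactin (weak_ba \<Omega> A) M" and kN: "compactin (weak_ba \<Omega> A) N"
  shows "M \<inter> N = {} \<longleftrightarrow>
    (\<exists>f\<in>simple_fns \<Omega> A. (INF \<nu>\<in>N. ereal (ba_integral \<Omega> \<nu> f)) > (SUP \<mu>\<in>M. ereal (ba_integral \<Omega> \<mu> f)))"
proof
  assume disj: "M \<inter> N = {}"
  show "\<exists>f\<in>simple_fns \<Omega> A. (INF \<nu>\<in>N. ereal (ba_integral \<Omega> \<nu> f)) > (SUP \<mu>\<in>M. ereal (ba_integral \<Omega> \<mu> f))"
  proof (cases "M = {} \<or> N = {}")
    case True
    then have "(SUP \<mu>\<in>M. ereal 0) < (INF \<nu>\<in>N. ereal 0)"
      by (cases "M = {}") (simp_all add: INF_constant SUP_constant bot_ereal_def top_ereal_def)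
    then show ?thesis using simple_fns_zero[OF alg] by (intro bexI[of _ "\<lambda>x. 0"]) simp_all
  next
    case False
    then obtain g \<delta> where g: "g \<in> simple_fns \<Omega> A" and "\<delta> < 0"
      and bound: "\<And>\<mu> \<nu>. \<mu> \<in> M \<Longrightarrow> \<nu> \<in> N \<Longrightarrow> ba_integral \<Omega> \<mu> g - ba_integral \<Omega> \<nu> g \<le> \<delta>"
      using separation[OF alg MA NA cM cN kM kN disj] by blast
    have "(SUP \<mu>\<in>M. ereal (ba_integral \<Omega> \<mu> g)) < (INF \<nu>\<in>N. ereal (ba_integral \<Omega> \<nu> g))"
    proof (rule SUP_less_INF_of_gap[where c = "- \<delta>"])
      fix \<mu> \<nu> assume "\<mu> \<in> M" "\<nu> \<in> N"
      then have "ba_integral \<Omega> \<mu> g - ba_integral \<Omega> \<nu> g \<le> \<delta>" by (rule bound)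
      then show "ba_integral \<Omega> \<mu> g + - \<delta> \<le> ba_integral \<Omega> \<nu> g" by linarith
    next
      show "M \<noteq> {}" "N \<noteq> {}" using False by blast+
      show "0 < - \<delta>" using \<open>\<delta> < 0\<close> by simp
    qed
    then show ?thesis using g by blast
  qed
next
  assume "\<exists>f\<in>simple_fns \<Omega> A. (INF \<nu>\<in>N. ereal (ba_integral \<Omega> \<nu> f)) > (SUP \<mu>\<in>M. ereal (ba_integral \<Omega> \<mu> f))"
  then obtain f where f: "(INF \<nu>\<in>N. ereal (ba_integral \<Omega> \<nu> f)) > (SUP \<mu>\<in>M. ereal (ba_integral \<Omega> \<mu> f))"
    by blast
  show "M \<inter> N = {}"
  proof (rule ccontr)
    assume "M \<inter> N \<noteq> {}"
    then obtain \<mu> where "\<mu> \<in> M" "\<mu> \<in> N" by blast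
    have "(INF \<nu>\<in>N. ereal (ba_integral \<Omega> \<nu> f)) \<le> ereal (ba_integral \<Omega> \<mu> f)"
      using \<open>\<mu> \<in> N\<close> by (rule INF_lower)
    also have "\<dots> \<le> (SUP \<mu>\<in>M. ereal (ba_integral \<Omega> \<mu> f))"
      using \<open>\<mu> \<in> M\<close> by (rule SUP_upper)
    finally show False using f by simp
  qed
qed

section \<open>Extreme points and Bauer's maximum principle\<close>

definition extreme_subset_ba :: "('a set \<Rightarrow> real) set \<Rightarrow> ('a set \<Rightarrow> real) set \<Rightarrow> bool" where
  "extreme_subset_ba M F \<longleftrightarrow> (\<forall>\<mu>\<in>M. \<forall>\<nu>\<in>M. \<forall>t::real.
      0 < t \<and> t < 1 \<and> (\<lambda>E. t * \<mu> E + (1 - t) * \<nu> E) \<in> F \<longrightarrow> \<mu> \<in> F \<and> \<nu> \<in> F)"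

lemma extreme_subset_Inter:
  "(\<And>F. F \<in> \<C> \<Longrightarrow> extreme_subset_ba M F) \<Longrightarrow> extreme_subset_ba M (\<Inter>\<C>)"
  unfolding extreme_subset_ba_def by blast

lemma extreme_points_subset: "extreme_points_ba M \<subseteq> M"
  unfolding extreme_points_ba_def by (rule Collect_subset)

lemma extreme_point_of_singleton:
  assumes "e \<in> M" "extreme_subset_ba M {e}"
  shows "e \<in> extreme_points_ba M"
  unfolding extreme_points_ba_def
proof (intro CollectI conjI notI)
  assume "\<exists>\<mu>\<in>M. \<exists>\<nu>\<in>M. \<exists>t. \<mu> \<noteq> \<nu> \<and> 0 < t \<and> t < 1 \<and> e = (\<lambda>E. t * \<mu> E + (1 - t) * \<nu> E)"
  then obtain \<mu> \<nu> t where "\<mu> \<in> M" "\<nu> \<in> M" "\<mu> \<noteq> \<nu>" "0 < t" "t < 1"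
    and e: "e = (\<lambda>E. t * \<mu> E + (1 - t) * \<nu> E)" by blast
  moreover have "(\<lambda>E. t * \<mu> E + (1 - t) * \<nu> E) \<in> {e}" using e by simp
  ultimately have "\<mu> \<in> {e} \<and> \<nu> \<in> {e}" using assms(2) unfolding extreme_subset_ba_def by blast
  then show False using \<open>\<mu> \<noteq> \<nu>\<close> by simp
qed (rule assms(1))

lemma convex_comb_eq_upper_bound:
  fixes a b m t :: real
  assumes "0 < t" "t < 1" "a \<le> m" "b \<le> m" "t * a + (1 - t) * b = m"
  shows "a = m" "b = m"
proof -
  have "t * (m - a) + (1 - t) * (m - b) = 0" using assms(5) by (simp add: algebra_simps)
  moreover have "0 \<le> t * (m - a)" "0 \<le> (1 - t) * (m - b)" using assms(1-4) by simp_all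
  ultimately have "t * (m - a) = 0" "(1 - t) * (m - b) = 0" by linarith+
  then show "a = m" "b = m" using assms(1,2) by simp_all
qed

lemma extreme_subset_argmax:
  assumes ext: "extreme_subset_ba M F" and le: "\<forall>\<rho>\<in>F. ba_integral \<Omega> \<rho> g \<le> m"
  shows "extreme_subset_ba M {\<rho>\<in>F. ba_integral \<Omega> \<rho> g = m}"
  unfolding extreme_subset_ba_def
proof (intro ballI allI impI)
  fix \<mu> \<nu> t assume "\<mu> \<in> M" "\<nu> \<in> M"
    and H: "0 < t \<and> t < 1 \<and> (\<lambda>E. t * \<mu> E + (1 - t) * \<nu> E) \<in> {\<rho>\<in>F. ba_integral \<Omega> \<rho> g = m}"
  then have "\<mu> \<in> F" "\<nu> \<in> F" using ext unfolding extreme_subset_ba_def by blast+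
  then have "ba_integral \<Omega> \<mu> g \<le> m" "ba_integral \<Omega> \<nu> g \<le> m" using le by auto
  moreover have "t * ba_integral \<Omega> \<mu> g + (1 - t) * ba_integral \<Omega> \<nu> g = m"
    using H by (simp add: ba_integral_comb)
  ultimately have "ba_integral \<Omega> \<mu> g = m" "ba_integral \<Omega> \<nu> g = m"
    using convex_comb_eq_upper_bound H by blast+
  then show "\<mu> \<in> {\<rho>\<in>F. ba_integral \<Omega> \<rho> g = m} \<and> \<nu> \<in> {\<rho>\<in>F. ba_integral \<Omega> \<rho> g = m}"
    using \<open>\<mu> \<in> F\<close> \<open>\<nu> \<in> F\<close> by simp
qed

lemma compact_space_Inter_chain:
  assumes "compact_space X" "subset.chain \<A> \<C>" "\<And>C. C \<in> \<C> \<Longrightarrow> closedin X C \<and> C \<noteq> {}"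
  shows "\<Inter>\<C> \<noteq> {}"
proof -
  have fip: "\<forall>\<U>. (\<forall>C\<in>\<U>. closedin X C) \<and> (\<forall>\<F>. finite \<F> \<and> \<F> \<subseteq> \<U> \<longrightarrow> \<Inter>\<F> \<noteq> {}) \<longrightarrow> \<Inter>\<U> \<noteq> {}"
    unfolding compact_space_fip[symmetric] by (rule assms(1))
  have "\<Inter>\<F> \<noteq> {}" if "finite \<F>" "\<F> \<subseteq> \<C>" for \<F>
  proof (cases "\<F> = {}")
    case False
    have "subset.chain \<A> \<F>"
      unfolding subset_chain_def
    proof (intro conjI ballI)
      show "\<F> \<subseteq> \<A>" using assms(2) that(2) unfolding subset_chain_def by (meson order_trans)
      fix F G assume "F \<in> \<F>" "G \<in> \<F>"
      then show "F \<subseteq> G \<or> G \<subseteq> F" using assms(2) that(2) unfolding subset_chain_def by (meson subsetD)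
    qed
    then have "\<Inter>\<F> \<in> \<F>" by (rule Inter_in_chain[OF that(1) False])
    then show ?thesis using assms(3) that(2) by blast
  qed simp
  then have "\<forall>\<F>. finite \<F> \<and> \<F> \<subseteq> \<C> \<longrightarrow> \<Inter>\<F> \<noteq> {}" by blast
  moreover have "\<forall>C\<in>\<C>. closedin X C" using assms(3) by blast
  ultimately show ?thesis by (rule mp[OF spec[OF fip, of \<C>], OF conjI[rotated]])
qed

text \<open>Zorn's lemma for closed sets: below any nonempty closed set with a property P that is
  stable under intersections there is a minimal such set (applied to the complements,
  which form a family closed under unions of chains).\<close>
lemma minimal_closed_subset:
  assumes X: "compact_space X" and F0: "closedin X F0" "F0 \<noteq> {}" "P F0"
    and P_Inter: "\<And>\<C>. (\<And>F. F \<in> \<C> \<Longrightarrow> P F) \<Longrightarrow> P (\<Inter>\<C>)"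
  obtains Fm where "closedin X Fm" "Fm \<noteq> {}" "P Fm" "Fm \<subseteq> F0"
    "\<And>F. closedin X F \<Longrightarrow> F \<noteq> {} \<Longrightarrow> P F \<Longrightarrow> F \<subseteq> Fm \<Longrightarrow> F = Fm"
proof -
  define Fam where "Fam = {F. closedin X F \<and> F \<noteq> {} \<and> P F \<and> F \<subseteq> F0}"
  define compl where "compl F = topspace X - F" for F
  have compl_compl: "compl (compl F) = F" if "F \<in> Fam" for F
    using that closedin_subset unfolding Fam_def compl_def by auto
  have compl_anti: "compl F \<subseteq> compl G \<longleftrightarrow> G \<subseteq> F" if "F \<in> Fam" "G \<in> Fam" for F G
  proof -
    have "F \<subseteq> topspace X" "G \<subseteq> topspace X" using that closedin_subset unfolding Fam_def by auto
    then show ?thesis unfolding compl_def by blast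
  qed
  have "\<exists>U\<in>compl ` Fam. \<forall>V\<in>compl ` Fam. U \<subseteq> V \<longrightarrow> V = U"
  proof (rule subset_Zorn_nonempty)
    show "compl ` Fam \<noteq> {}" using F0 unfolding Fam_def by blast
    fix \<C> assume "\<C> \<noteq> {}" and chain: "subset.chain (compl ` Fam) \<C>"
    have "\<C> \<subseteq> compl ` Fam" using chain by (simp add: subset_chain_def)
    then obtain Fs where Fs: "Fs \<subseteq> Fam" "\<C> = compl ` Fs" by (rule subset_imageE)
    then have "Fs \<noteq> {}" using \<open>\<C> \<noteq> {}\<close> by blast
    have "subset.chain Fam Fs"
      unfolding subset_chain_def
    proof (intro conjI ballI Fs(1))
      fix F G assume "F \<in> Fs" "G \<in> Fs"
      then have "compl F \<subseteq> compl G \<or> compl G \<subseteq> compl F"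
        using chain Fs(2) unfolding subset_chain_def by blast
      then show "F \<subseteq> G \<or> G \<subseteq> F" using compl_anti Fs(1) \<open>F \<in> Fs\<close> \<open>G \<in> Fs\<close> by blast
    qed
    then have "\<Inter>Fs \<noteq> {}"
      by (rule compact_space_Inter_chain[OF X]) (use Fs(1) in \<open>auto simp: Fam_def\<close>)
    moreover have "closedin X (\<Inter>Fs)" using Fs(1) \<open>Fs \<noteq> {}\<close> unfolding Fam_def by (intro closedin_Inter) auto
    moreover have "P (\<Inter>Fs)" using Fs(1) unfolding Fam_def by (intro P_Inter) auto
    moreover have "\<Inter>Fs \<subseteq> F0" using Fs(1) \<open>Fs \<noteq> {}\<close> unfolding Fam_def by auto
    ultimately have "\<Inter>Fs \<in> Fam" unfolding Fam_def by blast
    moreover have "\<Union>\<C> = compl (\<Inter>Fs)" unfolding Fs(2) compl_def using \<open>Fs \<noteq> {}\<close> by auto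
    ultimately show "\<Union>\<C> \<in> compl ` Fam" by blast
  qed
  then obtain Fm where Fm: "Fm \<in> Fam"
    and max: "\<And>F. F \<in> Fam \<Longrightarrow> compl Fm \<subseteq> compl F \<Longrightarrow> compl F = compl Fm"
    by blast
  have minimal: "F = Fm" if "closedin X F" "F \<noteq> {}" "P F" "F \<subseteq> Fm" for F
  proof -
    have "F \<in> Fam" using that Fm unfolding Fam_def by blast
    then have "compl F = compl Fm" using max compl_anti Fm \<open>F \<subseteq> Fm\<close> by blast
    then show "F = Fm" using compl_compl \<open>F \<in> Fam\<close> Fm by metis
  qed
  from Fm have "closedin X Fm" "Fm \<noteq> {}" "P Fm" "Fm \<subseteq> F0" unfolding Fam_def by blast+
  then show thesis using that minimal by blast
qed

lemma maximizing_extreme_subset: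
  assumes alg: "algebra \<Omega> A" and kM: "compactin (weak_ba \<Omega> A) M"
    and F: "closedin (subtopology (weak_ba \<Omega> A) M) F" "F \<noteq> {}" "extreme_subset_ba M F"
    and g: "g \<in> simple_fns \<Omega> A"
  obtains m where "\<forall>\<rho>\<in>F. ba_integral \<Omega> \<rho> g \<le> m"
    "closedin (subtopology (weak_ba \<Omega> A) M) {\<rho>\<in>F. ba_integral \<Omega> \<rho> g = m}"
    "{\<rho>\<in>F. ba_integral \<Omega> \<rho> g = m} \<noteq> {}" "extreme_subset_ba M {\<rho>\<in>F. ba_integral \<Omega> \<rho> g = m}"
proof -
  let ?T = "subtopology (weak_ba \<Omega> A) M"
  have cont: "continuous_map ?T euclideanreal (\<lambda>\<rho>. ba_integral \<Omega> \<rho> g)"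
    by (rule continuous_map_from_subtopology[OF continuous_map_ba_integral[OF alg g]])
  have "compactin ?T F" by (rule closedin_compact_space[OF compact_space_subtopology[OF kM] F(1)])
  then obtain \<rho>0 where "\<rho>0 \<in> F" and max: "\<And>\<rho>. \<rho> \<in> F \<Longrightarrow> ba_integral \<Omega> \<rho> g \<le> ba_integral \<Omega> \<rho>0 g"
    using compactin_attains_max[OF _ F(2) cont] by blast
  define m where "m = ba_integral \<Omega> \<rho>0 g"
  have "closedin ?T (F \<inter> {\<rho> \<in> topspace ?T. ba_integral \<Omega> \<rho> g \<in> {m}})"
    by (intro closedin_Int F(1) closedin_continuous_map_preimage[OF cont]) simp
  moreover have "F \<inter> {\<rho> \<in> topspace ?T. ba_integral \<Omega> \<rho> g \<in> {m}} = {\<rho>\<in>F. ba_integral \<Omega> \<rho> g = m}"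
    using closedin_subset[OF F(1)] by auto
  ultimately show thesis
    using that[of m] max \<open>\<rho>0 \<in> F\<close> extreme_subset_argmax[OF F(3), of \<Omega> g m]
    unfolding m_def by auto
qed

text \<open>A minimal nonempty closed extreme subset of a weakly compact M is a singleton:
  two different points differ on some E \<in> A, and the maximisers of the indicator of E
  would form a strictly smaller closed extreme subset.\<close>
lemma minimal_extreme_subset_singleton:
  assumes alg: "algebra \<Omega> A" and MA: "M \<subseteq> ba \<Omega> A" and kM: "compactin (weak_ba \<Omega> A) M"
    and Fm: "closedin (subtopology (weak_ba \<Omega> A) M) Fm" "Fm \<noteq> {}" "extreme_subset_ba M Fm"
    and minimal: "\<And>F. closedin (subtopology (weak_ba \<Omega> A) M) F \<Longrightarrow> F \<noteq> {} \<Longrightarrow>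
                    extreme_subset_ba M F \<Longrightarrow> F \<subseteq> Fm \<Longrightarrow> F = Fm"
    and \<rho>: "\<rho> \<in> Fm" and e: "e \<in> Fm"
  shows "\<rho> = e"
proof (rule ccontr)
  assume "\<rho> \<noteq> e"
  moreover have "Fm \<subseteq> M" using closedin_subset[OF Fm(1)] by simp
  then have "\<rho> \<in> ba \<Omega> A" "e \<in> ba \<Omega> A" using \<rho> e MA by auto
  ultimately obtain E where E: "E \<in> A" "\<rho> E \<noteq> e E"
    using ba_distinguishing_set[of \<rho> \<Omega> A e] by blast
  define g where "g x = (if x \<in> E then 1 else (0::real))" for x
  have g: "g \<in> simple_fns \<Omega> A" unfolding g_def by (rule simple_fns_indicator(1)[OF alg E(1)])
  obtain m where "closedin (subtopology (weak_ba \<Omega> A) M) {\<sigma>\<in>Fm. ba_integral \<Omega> \<sigma> g = m}"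
      "{\<sigma>\<in>Fm. ba_integral \<Omega> \<sigma> g = m} \<noteq> {}" "extreme_subset_ba M {\<sigma>\<in>Fm. ba_integral \<Omega> \<sigma> g = m}"
    by (rule maximizing_extreme_subset[OF alg kM Fm g])
  then have "{\<sigma>\<in>Fm. ba_integral \<Omega> \<sigma> g = m} = Fm" by (rule minimal) auto
  then have "ba_integral \<Omega> \<rho> g = m" "ba_integral \<Omega> e g = m" using \<rho> e by blast+
  then show False using E(2) simple_fns_indicator(2)[OF alg E(1)] \<open>\<rho> \<in> ba \<Omega> A\<close> \<open>e \<in> ba \<Omega> A\<close>
    unfolding g_def by simp
qed

text \<open>Zorn's lemma yields a minimal
  closed extreme subset inside the set of maximisers; it is a singleton {e}, and e is an
  extreme point.\<close>
lemma extreme_point_maximizer: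
  assumes alg: "algebra \<Omega> A" and MA: "M \<subseteq> ba \<Omega> A"
    and kM: "compactin (weak_ba \<Omega> A) M" and "M \<noteq> {}" and k: "k \<in> simple_fns \<Omega> A"
  obtains e where "e \<in> extreme_points_ba M" "\<And>\<mu>. \<mu> \<in> M \<Longrightarrow> ba_integral \<Omega> \<mu> k \<le> ba_integral \<Omega> e k"
proof -
  let ?T = "subtopology (weak_ba \<Omega> A) M"
  have "closedin ?T M" using closedin_topspace[of ?T] MA by (simp add: Int_absorb1)
  moreover have "extreme_subset_ba M M" unfolding extreme_subset_ba_def by blast
  ultimately obtain m0 where m0: "\<forall>\<rho>\<in>M. ba_integral \<Omega> \<rho> k \<le> m0"
    and F0: "closedin ?T {\<rho>\<in>M. ba_integral \<Omega> \<rho> k = m0}" "{\<rho>\<in>M. ba_integral \<Omega> \<rho> k = m0} \<noteq> {}"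
      "extreme_subset_ba M {\<rho>\<in>M. ba_integral \<Omega> \<rho> k = m0}"
    by (rule maximizing_extreme_subset[OF alg kM _ \<open>M \<noteq> {}\<close> _ k])
  obtain Fm where Fm: "closedin ?T Fm" "Fm \<noteq> {}" "extreme_subset_ba M Fm"
      "Fm \<subseteq> {\<rho>\<in>M. ba_integral \<Omega> \<rho> k = m0}"
    and minimal: "\<And>F. closedin ?T F \<Longrightarrow> F \<noteq> {} \<Longrightarrow> extreme_subset_ba M F \<Longrightarrow> F \<subseteq> Fm \<Longrightarrow> F = Fm"
    using minimal_closed_subset[where P = "extreme_subset_ba M",
        OF compact_space_subtopology[OF kM] F0 extreme_subset_Inter] by blast
  obtain e where "e \<in> Fm" using Fm(2) by blast
  then have "Fm = {e}"
    using minimal_extreme_subset_singleton[OF alg MA kM Fm(1-3) minimal] by blast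
  then have "extreme_subset_ba M {e}" using Fm(3) by simp
  moreover have "e \<in> M" "ba_integral \<Omega> e k = m0" using Fm(4) \<open>e \<in> Fm\<close> by auto
  ultimately have "e \<in> extreme_points_ba M" by (intro extreme_point_of_singleton)
  then show thesis using that m0 \<open>ba_integral \<Omega> e k = m0\<close> by blast
qed

section \<open>Representation by extreme points\<close>

lemma SUP_extreme_points:
  assumes alg: "algebra \<Omega> A" and MA: "M \<subseteq> ba \<Omega> A"
    and kM: "compactin (weak_ba \<Omega> A) M" and k: "k \<in> simple_fns \<Omega> A"
  shows "(SUP e\<in>extreme_points_ba M. ereal (ba_integral \<Omega> e k)) = (SUP \<mu>\<in>M. ereal (ba_integral \<Omega> \<mu> k))"
proof (cases "M = {}")
  case True
  then show ?thesis using extreme_points_subset[of M] by simp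
next
  case False
  then obtain e where e: "e \<in> extreme_points_ba M"
    and max: "\<And>\<mu>. \<mu> \<in> M \<Longrightarrow> ba_integral \<Omega> \<mu> k \<le> ba_integral \<Omega> e k"
    using extreme_point_maximizer[OF alg MA kM False k] by blast
  show ?thesis
  proof (rule antisym)
    show "(SUP e\<in>extreme_points_ba M. ereal (ba_integral \<Omega> e k)) \<le> (SUP \<mu>\<in>M. ereal (ba_integral \<Omega> \<mu> k))"
      by (rule SUP_subset_mono[OF extreme_points_subset]) simp
    have "(SUP \<mu>\<in>M. ereal (ba_integral \<Omega> \<mu> k)) \<le> ereal (ba_integral \<Omega> e k)"
      using max by (intro SUP_least) simp
    also have "\<dots> \<le> (SUP e\<in>extreme_points_ba M. ereal (ba_integral \<Omega> e k))"
      using e by (rule SUP_upper)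
    finally show "(SUP \<mu>\<in>M. ereal (ba_integral \<Omega> \<mu> k)) \<le> (SUP e\<in>extreme_points_ba M. ereal (ba_integral \<Omega> e k))" .
  qed
qed

text \<open>M is the intersection of the half-spaces determined by simple functions: a point m
  outside M is strictly separated from M by part (i) applied to M and {m}, and the zero
  function excludes every m when M is empty.\<close>
lemma halfspace_representation:
  assumes alg: "algebra \<Omega> A" and MA: "M \<subseteq> ba \<Omega> A"
    and cM: "convex_ba M" and kM: "compactin (weak_ba \<Omega> A) M"
  shows "M = {m \<in> ba \<Omega> A. \<forall>k\<in>simple_fns \<Omega> A. ereal (ba_integral \<Omega> m k) \<le> (SUP \<mu>\<in>M. ereal (ba_integral \<Omega> \<mu> k))}"
proof (intro equalityI subsetI CollectI conjI ballI)
  fix m assume "m \<in> M"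
  then show "m \<in> ba \<Omega> A" using MA by blast
  show "ereal (ba_integral \<Omega> m k) \<le> (SUP \<mu>\<in>M. ereal (ba_integral \<Omega> \<mu> k))" for k
    using \<open>m \<in> M\<close> by (rule SUP_upper)
next
  fix m assume m: "m \<in> {m \<in> ba \<Omega> A. \<forall>k\<in>simple_fns \<Omega> A. ereal (ba_integral \<Omega> m k) \<le> (SUP \<mu>\<in>M. ereal (ba_integral \<Omega> \<mu> k))}"
  then have mA: "m \<in> ba \<Omega> A" and below: "\<And>k. k \<in> simple_fns \<Omega> A \<Longrightarrow> ereal (ba_integral \<Omega> m k) \<le> (SUP \<mu>\<in>M. ereal (ba_integral \<Omega> \<mu> k))"
    by auto
  show "m \<in> M"
  proof (rule ccontr)
    assume "m \<notin> M"
    have "M \<noteq> {}"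
      using below[OF simple_fns_zero(1)[OF alg]] simple_fns_zero(2)[OF alg] by (auto simp: bot_ereal_def)
    moreover have "convex_ba {m}" unfolding convex_ba_def by (auto simp: algebra_simps)
    moreover have "compactin (weak_ba \<Omega> A) {m}" using mA by simp
    moreover have "M \<inter> {m} = {}" using \<open>m \<notin> M\<close> by blast
    ultimately obtain g \<delta> where g: "g \<in> simple_fns \<Omega> A" and "\<delta> < 0"
      and bound: "\<And>\<mu> \<nu>. \<mu> \<in> M \<Longrightarrow> \<nu> \<in> {m} \<Longrightarrow> ba_integral \<Omega> \<mu> g - ba_integral \<Omega> \<nu> g \<le> \<delta>"
      using separation[OF alg MA _ cM _ kM, of "{m}"] mA by blast
    have "(SUP \<mu>\<in>M. ereal (ba_integral \<Omega> \<mu> g)) \<le> ereal (ba_integral \<Omega> m g + \<delta>)"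
    proof (rule SUP_least)
      fix \<mu> assume "\<mu> \<in> M"
      then have "ba_integral \<Omega> \<mu> g - ba_integral \<Omega> m g \<le> \<delta>" using bound by blast
      then show "ereal (ba_integral \<Omega> \<mu> g) \<le> ereal (ba_integral \<Omega> m g + \<delta>)" by simp
    qed
    also have "\<dots> < ereal (ba_integral \<Omega> m g)" using \<open>\<delta> < 0\<close> by simp
    finally show False using leD[OF below[OF g]] by blast
  qed
qed

lemma extreme_points_attain_max:
  assumes alg: "algebra \<Omega> A" and MA: "M \<subseteq> ba \<Omega> A" and kM: "compactin (weak_ba \<Omega> A) M"
    and k: "k \<in> simple_fns \<Omega> A" and ne: "extreme_points_ba M \<noteq> {}"
  shows "\<exists>\<mu>0\<in>extreme_points_ba M. \<forall>\<mu>\<in>extreme_points_ba M. ba_integral \<Omega> \<mu> k \<le> ba_integral \<Omega> \<mu>0 k"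
proof -
  have "M \<noteq> {}" using ne extreme_points_subset by blast
  obtain e where "e \<in> extreme_points_ba M" "\<And>\<mu>. \<mu> \<in> M \<Longrightarrow> ba_integral \<Omega> \<mu> k \<le> ba_integral \<Omega> e k"
    using extreme_point_maximizer[OF alg MA kM \<open>M \<noteq> {}\<close> k] by blast
  then show ?thesis using extreme_points_subset by blast
qed

theorem extreme_point_representation:
  assumes alg: "algebra \<Omega> A" and MA: "M \<subseteq> ba \<Omega> A"
    and cM: "convex_ba M" and kM: "compactin (weak_ba \<Omega> A) M"
  shows "M = {m \<in> ba \<Omega> A. \<forall>k\<in>simple_fns \<Omega> A.
            ereal (ba_integral \<Omega> m k) \<le> (SUP \<mu>\<in>extreme_points_ba M. ereal (ba_integral \<Omega> \<mu> k))}"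
proof -
  have sup_eq: "{m \<in> ba \<Omega> A. \<forall>k\<in>simple_fns \<Omega> A.
            ereal (ba_integral \<Omega> m k) \<le> (SUP \<mu>\<in>extreme_points_ba M. ereal (ba_integral \<Omega> \<mu> k))}
      = {m \<in> ba \<Omega> A. \<forall>k\<in>simple_fns \<Omega> A. ereal (ba_integral \<Omega> m k) \<le> (SUP \<mu>\<in>M. ereal (ba_integral \<Omega> \<mu> k))}"
    using SUP_extreme_points[OF alg MA kM] by simp
  show ?thesis unfolding sup_eq by (rule halfspace_representation[OF alg MA cM kM])
qed

theorem mainTheorem12:
  fixes \<Omega> :: "'a set" and A :: "'a set set"
    and M N :: "('a set \<Rightarrow> real) set"
  assumes "algebra \<Omega> A"
    and "M \<subseteq> ba \<Omega> A" and "N \<subseteq> ba \<Omega> A"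
    and "convex_ba M" and "convex_ba N"
    and "compactin (weak_ba \<Omega> A) M" and "compactin (weak_ba \<Omega> A) N"
  shows "(M \<inter> N = {} \<longleftrightarrow>
           (\<exists>f\<in>simple_fns \<Omega> A.
              (INF \<nu>\<in>N. ereal (ba_integral \<Omega> \<nu> f)) > (SUP \<mu>\<in>M. ereal (ba_integral \<Omega> \<mu> f))))
       \<and> (\<exists>K \<subseteq> simple_fns \<Omega> A. \<exists>M0 \<subseteq> extreme_points_ba M.
            (\<forall>k\<in>K. M0 \<noteq> {} \<longrightarrow> (\<exists>\<mu>0\<in>M0. \<forall>\<mu>\<in>M0. ba_integral \<Omega> \<mu> k \<le> ba_integral \<Omega> \<mu>0 k))
          \<and> M = {m \<in> ba \<Omega> A. \<forall>k\<in>K.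
                   ereal (ba_integral \<Omega> m k) \<le> (SUP \<mu>\<in>M0. ereal (ba_integral \<Omega> \<mu> k))})"
proof -
  note alg = assms(1) and MA = assms(2) and cM = assms(4) and kM = assms(6)
  have "\<exists>K \<subseteq> simple_fns \<Omega> A. \<exists>M0 \<subseteq> extreme_points_ba M.
            (\<forall>k\<in>K. M0 \<noteq> {} \<longrightarrow> (\<exists>\<mu>0\<in>M0. \<forall>\<mu>\<in>M0. ba_integral \<Omega> \<mu> k \<le> ba_integral \<Omega> \<mu>0 k))
          \<and> M = {m \<in> ba \<Omega> A. \<forall>k\<in>K.
                   ereal (ba_integral \<Omega> m k) \<le> (SUP \<mu>\<in>M0. ereal (ba_integral \<Omega> \<mu> k))}"
  proof (intro exI[of _ "simple_fns \<Omega> A"] exI[of _ "extreme_points_ba M"] conjI subset_refl ballI impI)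
    fix k assume "k \<in> simple_fns \<Omega> A" "extreme_points_ba M \<noteq> {}"
    then show "\<exists>\<mu>0\<in>extreme_points_ba M. \<forall>\<mu>\<in>extreme_points_ba M. ba_integral \<Omega> \<mu> k \<le> ba_integral \<Omega> \<mu>0 k"
      by (rule extreme_points_attain_max[OF alg MA kM])
  qed (rule extreme_point_representation[OF alg MA cM kM])
  with separation_iff[OF assms] show ?thesis by (rule conjI)
qed

end
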